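(* The family $\mathcal P$ of sets of $P$-sums contained in $[0,1]$ is not closed in $K([0,1])$ with respect to the Pompeiu–Hausdorff metric.
   Context: For a finite set $P\subset\mathbb R$ and a real sequence $(a_n)$ with $\sum_n|a_n|<\infty$, the set of $P$-sums is $\{\sum_{n\in\mathbb N}\xi_n a_n:\ \xi_n\in P \text{ for all } n\}$. $\mathcal P$ denotes the family of all sets $T\subset[0,1]$ that are sets of $P$-sums for some finite $P$ and some such sequence $(a_n)$. $K([0,1])$ is the family of non-empty compact subsets of $[0,1]$ with the Pompeiu–Hausdorff metric $d_H(A,B)=\max\{\sup_{a\in A}\operatorname{dist}(a,B),\sup_{b\in B}\operatorname{dist}(b,A)\}$. *)

theory Defs
  imports "HOL-Analysis.Analysis"
begin

definition Psums :: "real set \<Rightarrow> (nat \<Rightarrow> real) \<Rightarrow> real set" where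
  "Psums P a = {s. \<exists>\<xi>. (\<forall>n. \<xi> n \<in> P) \<and> s = (\<Sum>n. \<xi> n * a n)}"

definition Pfamily :: "real set set" where
  "Pfamily = {T. T \<subseteq> {0..1} \<and>
     (\<exists>P a. finite P \<and> P \<noteq> {} \<and> summable (\<lambda>n. \<bar>a n\<bar>) \<and> T = Psums P a)}"

definition Kunit :: "real set set" where
  "Kunit = {K. K \<noteq> {} \<and> compact K \<and> K \<subseteq> {0..1}}"

text \<open>Pompeiu--Hausdorff distance (used on nonempty compact sets, where the suprema are finite).\<close>
definition hausdist :: "real set \<Rightarrow> real set \<Rightarrow> real" where
  "hausdist A B = max (SUP a\<in>A. infdist a B) (SUP b\<in>B. infdist b A)"

end

theory Submission
  imports Defs
begin

text \<open>The compact set K = {0} \<union> {1/(n+1) | n \<in> \<nat>} is the limit of its finite truncations,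
  and every finite set T \<subseteq> [0,1] is the set of T-sums of the sequence 1, 0, 0, \<dots>.
  But K is not a set of P-sums: an infinite set of P-sums has no isolated points,
  because changing one coefficient \<xi> n at an index with a small nonzero a n moves a
  P-sum by a small nonzero amount, whereas 1 is isolated in K.\<close>

lemma finite_Psums_if_subsingleton:
  assumes "P \<subseteq> {c}"
  shows "finite (Psums P a)"
proof (rule finite_subset)
  show "Psums P a \<subseteq> {\<Sum>n. c * a n}"
  proof
    fix s assume "s \<in> Psums P a"
    then obtain \<xi> where \<xi>: "\<forall>n. \<xi> n \<in> P" and s: "s = (\<Sum>n. \<xi> n * a n)"
      unfolding Psums_def by blast
    have "\<xi> = (\<lambda>_. c)"
      using \<xi> assms by auto
    then show "s \<in> {\<Sum>n. c * a n}"
      using s by simp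
  qed
qed simp

lemma finite_Psums_if_finite_support:
  assumes "finite P" and "finite {n. a n \<noteq> 0}"
  shows "finite (Psums P a)"
proof -
  obtain N where N: "{n. a n \<noteq> 0} \<subseteq> {..<N}"
    using assms(2) finite_nat_bounded by blast
  have "Psums P a \<subseteq> (\<lambda>\<xi>. \<Sum>n<N. \<xi> n * a n) ` PiE {..<N} (\<lambda>_. P)"
  proof
    fix s assume "s \<in> Psums P a"
    then obtain \<xi> where \<xi>: "\<forall>n. \<xi> n \<in> P" and s: "s = (\<Sum>n. \<xi> n * a n)"
      unfolding Psums_def by blast
    have "s = (\<Sum>n<N. restrict \<xi> {..<N} n * a n)"
      unfolding s by (subst suminf_finite[of "{..<N}"]) (use N in auto)
    then show "s \<in> (\<lambda>\<xi>. \<Sum>n<N. \<xi> n * a n) ` PiE {..<N} (\<lambda>_. P)"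
      using \<xi> by (intro image_eqI[of _ _ "restrict \<xi> {..<N}"]) auto
  qed
  then show ?thesis
    using assms(1) by (meson finite_PiE finite_imageI finite_lessThan finite_subset)
qed

lemma suminf_fun_upd_mult:
  fixes \<xi> a :: "nat \<Rightarrow> real"
  assumes "summable (\<lambda>m. \<xi> m * a m)"
  shows "(\<Sum>m. (\<xi>(n := r)) m * a m) = (\<Sum>m. \<xi> m * a m) + (r - \<xi> n) * a n"
proof -
  have "(\<lambda>m. (\<xi>(n := r)) m * a m) = (\<lambda>m. \<xi> m * a m + (if m = n then (r - \<xi> n) * a n else 0))"
    by (auto simp: algebra_simps)
  moreover have "(\<lambda>m. if m = n then (r - \<xi> n) * a n else 0) sums ((r - \<xi> n) * a n)"
    using sums_single[of n "\<lambda>_. (r - \<xi> n) * a n"] by simp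
  ultimately show ?thesis
    using sums_add[OF summable_sums[OF assms]] by (simp add: sums_iff)
qed

lemma Psums_islimpt:
  assumes "finite P" and "summable (\<lambda>n. \<bar>a n\<bar>)" and "infinite (Psums P a)"
    and "s \<in> Psums P a"
  shows "s islimpt Psums P a"
  unfolding islimpt_approachable_real
proof (intro allI impI)
  fix e :: real assume "e > 0"
  obtain \<xi> where \<xi>: "\<forall>n. \<xi> n \<in> P" and s: "s = (\<Sum>n. \<xi> n * a n)"
    using assms(4) unfolding Psums_def by blast
  obtain M where M: "\<And>x. x \<in> P \<Longrightarrow> \<bar>x\<bar> \<le> M"
    using finite_imp_bounded[OF assms(1)] by (auto simp: bounded_real)
  have "M \<ge> 0"
    using M \<xi> by (meson abs_ge_zero order_trans)
  have summable: "summable (\<lambda>m. \<xi> m * a m)"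
    by (rule summable_comparison_test[of _ "\<lambda>m. M * \<bar>a m\<bar>"])
       (use \<xi> M assms(2) in \<open>auto simp: abs_mult intro!: mult_right_mono summable_mult\<close>)
  have "\<forall>\<^sub>F n in sequentially. \<bar>a n\<bar> < e / (2 * M + 1)"
    using order_tendstoD(2)[OF summable_LIMSEQ_zero[OF assms(2)]] \<open>e > 0\<close> \<open>M \<ge> 0\<close> by simp
  then obtain N where N: "\<And>n. n \<ge> N \<Longrightarrow> \<bar>a n\<bar> < e / (2 * M + 1)"
    unfolding eventually_sequentially by blast
  have "infinite {n. a n \<noteq> 0}"
    using finite_Psums_if_finite_support assms(1,3) by blast
  then obtain n where "n \<ge> N" and "a n \<noteq> 0"
    unfolding infinite_nat_iff_unbounded_le by blast
  obtain r where "r \<in> P" and "r \<noteq> \<xi> n"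
    using finite_Psums_if_subsingleton[of P "\<xi> n" a] assms(3) by blast
  define s' where "s' = (\<Sum>m. (\<xi>(n := r)) m * a m)"
  have "s' \<in> Psums P a"
    unfolding s'_def Psums_def using \<xi> \<open>r \<in> P\<close> by (intro CollectI exI[of _ "\<xi>(n := r)"]) auto
  moreover have "s' - s = (r - \<xi> n) * a n"
    unfolding s'_def s suminf_fun_upd_mult[OF summable] by simp
  moreover have "\<bar>(r - \<xi> n) * a n\<bar> < e"
  proof -
    have "\<bar>r - \<xi> n\<bar> \<le> 2 * M + 1"
      using M[OF \<open>r \<in> P\<close>] M[OF \<xi>[rule_format, of n]] by linarith
    then have "\<bar>(r - \<xi> n) * a n\<bar> \<le> (2 * M + 1) * \<bar>a n\<bar>"
      by (simp add: abs_mult mult_right_mono)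
    also have "\<dots> < e"
      using N[OF \<open>n \<ge> N\<close>] \<open>M \<ge> 0\<close> by (simp add: field_simps)
    finally show ?thesis .
  qed
  ultimately show "\<exists>s'\<in>Psums P a. s' \<noteq> s \<and> \<bar>s' - s\<bar> < e"
    using \<open>r \<noteq> \<xi> n\<close> \<open>a n \<noteq> 0\<close> by (intro bexI[of _ s']) auto
qed

lemma Psums_first_unit_vector: "Psums P (\<lambda>n. if n = 0 then 1 else 0) = P"
proof -
  have eval: "(\<Sum>n. \<xi> n * (if n = 0 then 1 else 0)) = \<xi> 0" for \<xi> :: "nat \<Rightarrow> real"
    using sums_single[of 0 \<xi>] by (simp add: sums_iff if_distrib cong: if_cong)
  show ?thesis
  proof
    show "Psums P (\<lambda>n. if n = 0 then 1 else 0) \<subseteq> P"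
      unfolding Psums_def eval by auto
    show "P \<subseteq> Psums P (\<lambda>n. if n = 0 then 1 else 0)"
    proof
      fix x assume "x \<in> P"
      then show "x \<in> Psums P (\<lambda>n. if n = 0 then 1 else 0)"
        unfolding Psums_def eval by (intro CollectI exI[of _ "\<lambda>_. x"]) auto
    qed
  qed
qed

lemma finite_in_Pfamily:
  assumes "finite T" and "T \<noteq> {}" and "T \<subseteq> {0..1}"
  shows "T \<in> Pfamily"
proof -
  have "summable (\<lambda>n. \<bar>if n = 0 then 1 else 0 :: real\<bar>)"
    by (rule summable_finite[of "{0}"]) auto
  then show ?thesis
    unfolding Pfamily_def using assms Psums_first_unit_vector[of T, symmetric]
    by (intro CollectI conjI exI[of _ T] exI[of _ "\<lambda>n. if n = 0 then 1 else 0"]) auto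
qed

lemma hausdist_le_if_subset:
  assumes "T \<subseteq> K" and "T \<noteq> {}" and "e \<ge> 0" and "\<And>x. x \<in> K \<Longrightarrow> infdist x T \<le> e"
  shows "hausdist T K \<le> e"
proof -
  have "(SUP x\<in>T. infdist x K) \<le> e"
    using assms by (intro cSUP_least) (auto simp: subset_iff)
  moreover have "(SUP x\<in>K. infdist x T) \<le> e"
    using assms by (intro cSUP_least) auto
  ultimately show ?thesis
    unfolding hausdist_def by simp
qed

definition harmonic_points :: "real set" where
  "harmonic_points = insert 0 (range (\<lambda>n. 1 / real (Suc n)))"

lemma harmonic_points_subset: "harmonic_points \<subseteq> {0..1}"
  by (auto simp: harmonic_points_def)

lemma harmonic_points_in_Kunit: "harmonic_points \<in> Kunit"
proof -
  have "(\<lambda>n. 1 / real (Suc n)) \<longlonglongrightarrow> 0"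
    using LIMSEQ_inverse_real_of_nat by (simp add: inverse_eq_divide)
  then show ?thesis
    unfolding Kunit_def using harmonic_points_subset compact_sequence_with_limit
    by (auto simp: harmonic_points_def)
qed

lemma harmonic_points_not_in_Pfamily: "harmonic_points \<notin> Pfamily"
proof
  assume "harmonic_points \<in> Pfamily"
  then obtain P a where "finite P" "summable (\<lambda>n. \<bar>a n\<bar>)" and K: "harmonic_points = Psums P a"
    unfolding Pfamily_def by blast
  have "inj (\<lambda>n. 1 / real (Suc n))"
    by (auto simp: inj_def)
  then have "infinite harmonic_points"
    unfolding harmonic_points_def by (simp add: range_inj_infinite)
  moreover have "1 \<in> harmonic_points"
    unfolding harmonic_points_def by (rule insertI2, rule range_eqI[of _ _ 0]) simp
  ultimately have "1 islimpt harmonic_points"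
    unfolding K by (rule Psums_islimpt[OF \<open>finite P\<close> \<open>summable (\<lambda>n. \<bar>a n\<bar>)\<close>])
  then have "\<exists>x\<in>harmonic_points. x \<noteq> 1 \<and> \<bar>x - 1\<bar> < 1/2"
    unfolding islimpt_approachable_real by (rule allE[of _ "1/2"]) simp_all
  then obtain n where "1 / real (Suc n) \<noteq> 1" and close: "\<bar>1 / real (Suc n) - 1\<bar> < 1/2"
    unfolding harmonic_points_def by auto
  then have "n \<ge> 1"
    by (cases n) auto
  then show False
    using close by (simp add: field_simps)
qed

lemma harmonic_points_approx:
  assumes "e > 0"
  shows "\<exists>T\<in>Pfamily. hausdist T harmonic_points < e"
proof -
  obtain N where N: "1 / real (Suc N) < e"
    using assms by (meson nat_approx_posE)
  define T where "T = insert 0 ((\<lambda>n. 1 / real (Suc n)) ` {..<N})"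
  have "T \<subseteq> harmonic_points"
    by (auto simp: T_def harmonic_points_def)
  then have "T \<in> Pfamily"
    using harmonic_points_subset by (intro finite_in_Pfamily) (auto simp: T_def)
  moreover have "infdist x T \<le> 1 / real (Suc N)" if hx: "x \<in> harmonic_points" for x
  proof (cases "x \<in> T")
    case False
    obtain n where x: "x = 1 / real (Suc n)"
      using hx False by (auto simp: T_def harmonic_points_def)
    have "n \<ge> N"
      using False unfolding x T_def by (meson imageI insertI2 lessThan_iff not_le)
    have "infdist x T \<le> dist x 0"
      by (rule infdist_le) (simp add: T_def)
    also have "\<dots> = 1 / real (Suc n)"
      unfolding x by simp
    also have "\<dots> \<le> 1 / real (Suc N)"
      using \<open>n \<ge> N\<close> by (intro divide_left_mono) auto
    finally show ?thesis .
  qed simp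
  then have "hausdist T harmonic_points \<le> 1 / real (Suc N)"
    using \<open>T \<subseteq> harmonic_points\<close> by (intro hausdist_le_if_subset) (auto simp: T_def)
  ultimately show ?thesis
    using N by (meson order_le_less_trans)
qed

theorem mainTheorem14:
  shows "\<exists>K \<in> Kunit. K \<notin> Pfamily \<and>
           (\<forall>\<epsilon>>0. \<exists>T \<in> Pfamily. hausdist T K < \<epsilon>)"
  using harmonic_points_in_Kunit harmonic_points_not_in_Pfamily harmonic_points_approx by blast

end
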